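(* Let $X,Y$ be real normed linear spaces and $Z=X\oplus_1Y$. Then: (i) If $x\in X\setminus\{\theta\}$, then $(x,\theta)\in Z$ is not $\varepsilon$-smooth for any $\varepsilon\in[0,2)$. (ii) If $y\in Y\setminus\{\theta\}$, then $(\theta,y)\in Z$ is not $\varepsilon$-smooth for any $\varepsilon\in[0,2)$. (iii) If $x\in X\setminus\{\theta\}$ is $\varepsilon_x$-smooth and $y\in Y\setminus\{\theta\}$ is $\varepsilon_y$-smooth, with $\varepsilon_x,\varepsilon_y\in[0,2)$, then $(x,y)\in Z$ is $\varepsilon$-smooth with $\varepsilon=\max\{\varepsilon_x,\varepsilon_y\}$.
   Context: $X\oplus_1Y$ is $X\times Y$ with norm $\|x\|+\|y\|$. For a normed space $W$ and $w\neq\theta$, $J(w)=\{\phi\in S_{W^*}:\phi(w)=\|w\|\}$, and $w$ is $\delta$-smooth if $\sup_{\phi,\psi\in J(w)}\|\phi-\psi\|\le\delta$; "approximately smooth" means $\delta$-smooth for some $\delta\in[0,2)$. *)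

theory Defs
  imports "HOL-Analysis.Analysis"
begin

text \<open>A normed space is given by a real vector space type together with a norm
function N. The dual unit sphere, the support set J and delta-smoothness are
defined relative to N, so that they apply both to the library norm of a
real_normed_vector and to the 1-sum norm on a product.\<close>

definition bdd_functional :: "('v::real_vector \<Rightarrow> real) \<Rightarrow> ('v \<Rightarrow> real) \<Rightarrow> bool" where
  "bdd_functional N f \<longleftrightarrow> linear f \<and> (\<exists>K. \<forall>z. \<bar>f z\<bar> \<le> K * N z)"

definition fnorm :: "('v::real_vector \<Rightarrow> real) \<Rightarrow> ('v \<Rightarrow> real) \<Rightarrow> real" where
  "fnorm N f = Sup {\<bar>f z\<bar> | z. N z \<le> 1}"

definition supp_set :: "('v::real_vector \<Rightarrow> real) \<Rightarrow> 'v \<Rightarrow> ('v \<Rightarrow> real) set" where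
  "supp_set N w = {f. bdd_functional N f \<and> fnorm N f = 1 \<and> f w = N w}"

definition delta_smooth :: "('v::real_vector \<Rightarrow> real) \<Rightarrow> real \<Rightarrow> 'v \<Rightarrow> bool" where
  "delta_smooth N \<delta> w \<longleftrightarrow> w \<noteq> 0 \<and>
     (\<forall>f\<in>supp_set N w. \<forall>g\<in>supp_set N w. fnorm N (\<lambda>z. f z - g z) \<le> \<delta>)"

definition l1_norm :: "'a::real_normed_vector \<times> 'b::real_normed_vector \<Rightarrow> real" where
  "l1_norm p = norm (fst p) + norm (snd p)"

end

theory Submission
  imports Defs
begin

text \<open>
Everything rests on norming functionals, i.e. on the Hahn-Banach theorem for real normed
spaces. It follows from the fact that a minimal sublinear functional p is linear: for any y,
the functional z \<mapsto> inf over t \<ge> 0 of p (z + t y) - t p y is again sublinear and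
below p, hence equal to p, and evaluating it at -y gives p (-y) \<le> - p y. Zorn's lemma provides minimal
sublinear functionals below any given one, since infima of chains are sublinear.

The dual unit ball of the 1-sum X \<oplus> Y consists of the functionals
(a, b) \<mapsto> \<phi> a + \<psi> b with \<phi>, \<psi> in the dual unit balls of X and Y, and such a functional norms (x, y) iff \<phi> norms x and
\<psi> norms y, a void condition on \<psi> when y = 0. So at (x, 0), if \<psi> norms some v \<noteq> 0, the
norming functionals \<phi> \<oplus> \<psi> and \<phi> \<oplus> -\<psi> are at distance 2, and (ii) is (i) up to swapping
the factors. For x, y \<noteq> 0 the difference of two norming functionals of (x, y) splits into
a part on X of norm at most \<epsilon>x and a part on Y of norm at most \<epsilon>y.
\<close>

section \<open>Sublinear functionals and the Hahn-Banach theorem\<close>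

definition sublinear :: "('v::real_vector \<Rightarrow> real) \<Rightarrow> bool" where
  "sublinear p \<longleftrightarrow> (\<forall>a b. p (a + b) \<le> p a + p b) \<and> (\<forall>c z. 0 \<le> c \<longrightarrow> p (c *\<^sub>R z) = c * p z)"

lemma sublinear_add: "sublinear p \<Longrightarrow> p (a + b) \<le> p a + p b"
  unfolding sublinear_def by blast

lemma sublinear_scaleR: "sublinear p \<Longrightarrow> 0 \<le> c \<Longrightarrow> p (c *\<^sub>R z) = c * p z"
  unfolding sublinear_def by blast

lemma sublinear_zero: "sublinear p \<Longrightarrow> p 0 = 0"
  using sublinear_scaleR[of p 0 0] by simp

lemma sublinear_minus_le: "sublinear p \<Longrightarrow> - p (- z) \<le> p z"
  using sublinear_add[of p z "- z"] sublinear_zero[of p] by simp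

lemma sublinear_norm: "sublinear norm"
  unfolding sublinear_def by (simp add: norm_triangle_ineq)

lemma sublinearI:
  assumes add: "\<And>a b. p (a + b) \<le> p a + p b" and zero: "p 0 \<le> 0"
    and scale: "\<And>c z. 0 < c \<Longrightarrow> p (c *\<^sub>R z) \<le> c * p z"
  shows "sublinear p"
  unfolding sublinear_def
proof (intro conjI allI impI add)
  fix c :: real and z assume "0 \<le> c"
  show "p (c *\<^sub>R z) = c * p z"
  proof (cases "c = 0")
    case True
    then show ?thesis using add[of 0 0] zero by simp
  next
    case False
    with \<open>0 \<le> c\<close> have c: "0 < c" by simp
    have "p z = p (inverse c *\<^sub>R (c *\<^sub>R z))" using c by simp
    also have "\<dots> \<le> inverse c * p (c *\<^sub>R z)" using c by (intro scale) simp
    finally have "c * p z \<le> p (c *\<^sub>R z)" using c by (simp add: field_simps)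
    with scale[OF c, of z] show ?thesis by simp
  qed
qed

lemma sublinear_linearI:
  assumes p: "sublinear p" and odd: "\<And>z. p (- z) \<le> - p z"
  shows "linear p"
proof -
  have minus: "p (- z) = - p z" for z
    using odd[of z] sublinear_minus_le[OF p, of z] by simp
  have add: "p (a + b) = p a + p b" for a b
    using sublinear_add[OF p, of a b] sublinear_add[OF p, of "- a" "- b"] minus[of "a + b"] minus[of a] minus[of b]
    by (simp add: add.commute)
  have scale: "p (c *\<^sub>R z) = c * p z" for c z
  proof (cases "0 \<le> c")
    case True
    then show ?thesis by (rule sublinear_scaleR[OF p])
  next
    case False
    then have "p (c *\<^sub>R z) = - p ((- c) *\<^sub>R z)" using minus[of "(- c) *\<^sub>R z"] by simp
    also have "\<dots> = c * p z" using False sublinear_scaleR[OF p, of "- c" z] by simp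
    finally show ?thesis .
  qed
  show ?thesis by (rule linearI) (simp_all add: add scale)
qed

definition sublinear_shift :: "('v::real_vector \<Rightarrow> real) \<Rightarrow> 'v \<Rightarrow> 'v \<Rightarrow> real" where
  "sublinear_shift p y z = (INF t\<in>{0..}. p (z + t *\<^sub>R y) - t * p y)"

lemma sublinear_shift_le:
  assumes p: "sublinear p" and t: "0 \<le> t"
  shows "sublinear_shift p y z \<le> p (z + t *\<^sub>R y) - t * p y"
  unfolding sublinear_shift_def
proof (rule cINF_lower)
  show "bdd_below ((\<lambda>t. p (z + t *\<^sub>R y) - t * p y) ` {0..})"
  proof (rule bdd_belowI2)
    fix s :: real assume "s \<in> {0..}"
    then have "p (s *\<^sub>R y) = s * p y" by (simp add: sublinear_scaleR[OF p])
    then show "- p (- z) \<le> p (z + s *\<^sub>R y) - s * p y"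
      using sublinear_add[OF p, of "z + s *\<^sub>R y" "- z"] by simp
  qed
qed (use t in simp)

lemma sublinear_shift_greatest:
  "(\<And>t. 0 \<le> t \<Longrightarrow> k \<le> p (z + t *\<^sub>R y) - t * p y) \<Longrightarrow> k \<le> sublinear_shift p y z"
  unfolding sublinear_shift_def by (rule cINF_greatest) auto

lemma sublinear_sublinear_shift:
  assumes p: "sublinear p"
  shows "sublinear (sublinear_shift p y)"
proof (rule sublinearI)
  fix a b
  have "sublinear_shift p y (a + b) - (p (b + t *\<^sub>R y) - t * p y) \<le> sublinear_shift p y a"
    if t: "0 \<le> t" for t
  proof (rule sublinear_shift_greatest)
    fix s :: real assume s: "0 \<le> s"
    have "sublinear_shift p y (a + b) \<le> p (a + b + (s + t) *\<^sub>R y) - (s + t) * p y"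
      using sublinear_shift_le[OF p] s t by simp
    also have "a + b + (s + t) *\<^sub>R y = (a + s *\<^sub>R y) + (b + t *\<^sub>R y)"
      by (simp add: algebra_simps)
    finally show "sublinear_shift p y (a + b) - (p (b + t *\<^sub>R y) - t * p y) \<le> p (a + s *\<^sub>R y) - s * p y"
      using sublinear_add[OF p, of "a + s *\<^sub>R y" "b + t *\<^sub>R y"] by (simp add: algebra_simps)
  qed
  then have "sublinear_shift p y (a + b) - sublinear_shift p y a \<le> sublinear_shift p y b"
    by (intro sublinear_shift_greatest) (simp add: algebra_simps)
  then show "sublinear_shift p y (a + b) \<le> sublinear_shift p y a + sublinear_shift p y b"
    by simp
next
  show "sublinear_shift p y 0 \<le> 0"
    using sublinear_shift_le[OF p order_refl, of y 0] sublinear_zero[OF p] by simp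
next
  fix c :: real and z assume c: "0 < c"
  have "sublinear_shift p y (c *\<^sub>R z) / c \<le> p (z + t *\<^sub>R y) - t * p y" if t: "0 \<le> t" for t
  proof -
    have "sublinear_shift p y (c *\<^sub>R z) \<le> p (c *\<^sub>R z + (c * t) *\<^sub>R y) - (c * t) * p y"
      using sublinear_shift_le[OF p] c t by simp
    also have "c *\<^sub>R z + (c * t) *\<^sub>R y = c *\<^sub>R (z + t *\<^sub>R y)"
      by (simp add: algebra_simps)
    finally show ?thesis
      using c sublinear_scaleR[OF p, of c "z + t *\<^sub>R y"] by (simp add: field_simps)
  qed
  then have "sublinear_shift p y (c *\<^sub>R z) / c \<le> sublinear_shift p y z"
    by (rule sublinear_shift_greatest)
  then show "sublinear_shift p y (c *\<^sub>R z) \<le> c * sublinear_shift p y z"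
    using c by (simp add: field_simps)
qed

lemma minimal_sublinear_linear:
  assumes p: "sublinear p" and minimal: "\<And>q. sublinear q \<Longrightarrow> q \<le> p \<Longrightarrow> q = p"
  shows "linear p"
proof (rule sublinear_linearI[OF p])
  fix y
  have "sublinear_shift p y \<le> p"
    using sublinear_shift_le[OF p order_refl] by (simp add: le_fun_def)
  then have "sublinear_shift p y = p"
    by (rule minimal[OF sublinear_sublinear_shift[OF p]])
  then show "p (- y) \<le> - p y"
    using sublinear_shift_le[OF p, of 1 y "- y"] sublinear_zero[OF p] by simp
qed

lemma sublinear_INF_lower:
  assumes sub: "\<And>q. q \<in> C \<Longrightarrow> sublinear q" and le: "\<And>q. q \<in> C \<Longrightarrow> q \<le> p"
    and q: "q \<in> C"
  shows "(INF r\<in>C. r z) \<le> q z"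
proof (rule cINF_lower[OF bdd_belowI2 q])
  fix r assume r: "r \<in> C"
  have "- p (- z) \<le> - r (- z)" using le[OF r] by (simp add: le_fun_def)
  also have "\<dots> \<le> r z" by (rule sublinear_minus_le[OF sub[OF r]])
  finally show "- p (- z) \<le> r z" .
qed

lemma sublinear_chain_INF:
  assumes "C \<noteq> {}" and sub: "\<And>q. q \<in> C \<Longrightarrow> sublinear q" and le: "\<And>q. q \<in> C \<Longrightarrow> q \<le> p"
    and chain: "\<And>q r. q \<in> C \<Longrightarrow> r \<in> C \<Longrightarrow> q \<le> r \<or> r \<le> q"
  shows "sublinear (\<lambda>z. INF q\<in>C. q z)"
proof -
  have lower: "(INF r\<in>C. r z) \<le> q z" if "q \<in> C" for q z
    using sub le that by (rule sublinear_INF_lower)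
  have greatest: "k \<le> (INF q\<in>C. q z)" if "\<And>q. q \<in> C \<Longrightarrow> k \<le> q z" for k z
    using \<open>C \<noteq> {}\<close> that by (rule cINF_greatest)
  show ?thesis
  proof (rule sublinearI)
    fix a b
    have "(INF q\<in>C. q (a + b)) \<le> q a + r b" if q: "q \<in> C" and r: "r \<in> C" for q r
    proof (cases "q \<le> r")
      case True
      have "(INF q\<in>C. q (a + b)) \<le> q (a + b)" by (rule lower[OF q])
      also have "\<dots> \<le> q a + q b" by (rule sublinear_add[OF sub[OF q]])
      also have "\<dots> \<le> q a + r b" using True by (simp add: le_fun_def)
      finally show ?thesis .
    next
      case False
      then have "r \<le> q" using chain[OF q r] by blast
      have "(INF q\<in>C. q (a + b)) \<le> r (a + b)" by (rule lower[OF r])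
      also have "\<dots> \<le> r a + r b" by (rule sublinear_add[OF sub[OF r]])
      also have "\<dots> \<le> q a + r b" using \<open>r \<le> q\<close> by (simp add: le_fun_def)
      finally show ?thesis .
    qed
    then have "(INF q\<in>C. q (a + b)) - r b \<le> (INF q\<in>C. q a)" if "r \<in> C" for r
      using that by (intro greatest) (simp add: algebra_simps)
    then have "(INF q\<in>C. q (a + b)) - (INF q\<in>C. q a) \<le> (INF q\<in>C. q b)"
      by (intro greatest) (simp add: algebra_simps)
    then show "(INF q\<in>C. q (a + b)) \<le> (INF q\<in>C. q a) + (INF q\<in>C. q b)"
      by simp
  next
    obtain q where q: "q \<in> C" using \<open>C \<noteq> {}\<close> by blast
    show "(INF q\<in>C. q 0) \<le> 0" using lower[OF q, of 0] sublinear_zero[OF sub[OF q]] by simp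
  next
    fix c :: real and z assume c: "0 < c"
    have "(INF q\<in>C. q (c *\<^sub>R z)) / c \<le> (INF q\<in>C. q z)"
    proof (rule greatest)
      fix q assume q: "q \<in> C"
      show "(INF q\<in>C. q (c *\<^sub>R z)) / c \<le> q z"
        using lower[OF q, of "c *\<^sub>R z"] sublinear_scaleR[OF sub[OF q], of c z] c
        by (simp add: field_simps)
    qed
    then show "(INF q\<in>C. q (c *\<^sub>R z)) \<le> c * (INF q\<in>C. q z)"
      using c by (simp add: field_simps)
  qed
qed

lemma minimal_sublinear_below_exists:
  assumes p: "sublinear p"
  obtains m where "sublinear m" "m \<le> p" "\<And>q. sublinear q \<Longrightarrow> q \<le> m \<Longrightarrow> q = m"
proof -
  define A where "A = {q. sublinear q \<and> q \<le> p}"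
  define P where "P = (\<lambda>q r :: 'a \<Rightarrow> real. r \<le> q)"
  have po: "partial_order_on A (relation_of P A)"
    unfolding partial_order_on_def preorder_on_def refl_on_def trans_on_def antisym_on_def
      relation_of_def P_def
    by auto
  have "\<exists>m\<in>A. \<forall>q\<in>A. P m q \<longrightarrow> q = m"
  proof (rule predicate_Zorn[OF po])
    fix C assume C: "C \<in> Chains (relation_of P A)"
    then have CA: "C \<subseteq> A" unfolding Chains_def relation_of_def by blast
    show "\<exists>u\<in>A. \<forall>q\<in>C. P q u"
    proof (cases "C = {}")
      case True
      then show ?thesis using p unfolding A_def by auto
    next
      case False
      define u where "u = (\<lambda>z. INF q\<in>C. q z)"
      have below: "u \<le> q" if "q \<in> C" for q
        unfolding le_fun_def u_def
      proof
        fix z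
        show "(INF q\<in>C. q z) \<le> q z"
          using CA that by (intro sublinear_INF_lower[where p = p]) (auto simp: A_def)
      qed
      have "sublinear u"
        unfolding u_def using C CA False
        by (intro sublinear_chain_INF[where p = p])
          (auto simp: A_def P_def Chains_def relation_of_def)
      moreover obtain q where "q \<in> C" using False by blast
      with below CA have "u \<le> p" unfolding A_def by (blast intro: order_trans)
      ultimately have "u \<in> A" unfolding A_def by blast
      with below show ?thesis unfolding P_def by blast
    qed
  qed
  then obtain m where "m \<in> A" and minimal: "\<And>q. q \<in> A \<Longrightarrow> q \<le> m \<Longrightarrow> q = m"
    unfolding P_def by blast
  moreover have "q \<in> A" if "sublinear q" "q \<le> m" for q
    using that \<open>m \<in> A\<close> unfolding A_def by (blast intro: order_trans)
  ultimately show ?thesis using that unfolding A_def by blast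
qed

lemma linear_le_sublinear_exists:
  assumes "sublinear p"
  obtains f where "linear f" "\<And>z. f z \<le> p z"
proof -
  obtain m where m: "sublinear m" "m \<le> p" and minimal: "\<And>q. sublinear q \<Longrightarrow> q \<le> m \<Longrightarrow> q = m"
    using minimal_sublinear_below_exists[OF assms] by blast
  from m(1) minimal have "linear m" by (rule minimal_sublinear_linear)
  with \<open>m \<le> p\<close> show ?thesis using that by (auto simp: le_fun_def)
qed

section \<open>Dual unit balls and support functionals\<close>

definition dual_ball :: "('v::real_vector \<Rightarrow> real) \<Rightarrow> ('v \<Rightarrow> real) set" where
  "dual_ball N = {f. linear f \<and> (\<forall>z. \<bar>f z\<bar> \<le> N z)}"

lemma norming_functional_exists:
  fixes x :: "'v::real_normed_vector"
  obtains f where "f \<in> dual_ball norm" "f x = norm x"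
proof -
  obtain f where f: "linear f" and le_shift: "\<And>z. f z \<le> sublinear_shift norm x z"
    using linear_le_sublinear_exists[OF sublinear_sublinear_shift[OF sublinear_norm]] by blast
  have le_norm: "f z \<le> norm z" for z
    using le_shift[of z] sublinear_shift_le[OF sublinear_norm order_refl, of x z] by simp
  have "\<bar>f z\<bar> \<le> norm z" for z
    using le_norm[of z] le_norm[of "- z"] linear_neg[OF f, of z] by simp
  moreover have "f x = norm x"
    using le_shift[of "- x"] sublinear_shift_le[OF sublinear_norm, of 1 x "- x"]
      linear_neg[OF f, of x] le_norm[of x] by simp
  ultimately show ?thesis using f that unfolding dual_ball_def by blast
qed

locale norm_function =
  fixes N :: "'v::real_vector \<Rightarrow> real"
  assumes nonneg: "0 \<le> N z"
    and scaleR: "N (c *\<^sub>R z) = \<bar>c\<bar> * N z"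
    and eq_0: "N z = 0 \<Longrightarrow> z = 0"
begin

lemma zero [simp]: "N 0 = 0"
  using scaleR[of 0 0] by simp

lemma abs_le_fnorm:
  assumes f: "bdd_functional N f"
  shows "\<bar>f z\<bar> \<le> fnorm N f * N z"
proof (cases "z = 0")
  case True
  then show ?thesis using f by (simp add: bdd_functional_def linear_0)
next
  case False
  then have pos: "0 < N z" using nonneg[of z] eq_0[of z] by fastforce
  obtain K where K: "\<And>u. \<bar>f u\<bar> \<le> K * N u" using f unfolding bdd_functional_def by blast
  have "bdd_above {\<bar>f u\<bar> | u. N u \<le> 1}"
  proof (rule bdd_aboveI[where M = "\<bar>K\<bar>"])
    fix w assume "w \<in> {\<bar>f u\<bar> | u. N u \<le> 1}"
    then obtain u where "N u \<le> 1" "w = \<bar>f u\<bar>" by blast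
    moreover have "K * N u \<le> \<bar>K\<bar>"
      using \<open>N u \<le> 1\<close> nonneg[of u] by (smt (verit) mult_left_le mult_right_mono)
    ultimately show "w \<le> \<bar>K\<bar>" using K[of u] by simp
  qed
  moreover have "N (inverse (N z) *\<^sub>R z) = 1" using pos by (simp add: scaleR)
  ultimately have "\<bar>f (inverse (N z) *\<^sub>R z)\<bar> \<le> fnorm N f"
    unfolding fnorm_def by (intro cSup_upper) auto
  moreover have "f (inverse (N z) *\<^sub>R z) = f z / N z"
    using f by (simp add: bdd_functional_def linear_scale divide_inverse_commute)
  ultimately show ?thesis using pos by (simp add: abs_div divide_le_eq)
qed

lemma fnorm_le:
  assumes c: "0 \<le> c" and f: "\<And>z. \<bar>f z\<bar> \<le> c * N z"
  shows "fnorm N f \<le> c"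
  unfolding fnorm_def
proof (rule cSup_least)
  have "\<bar>f 0\<bar> \<in> {\<bar>f z\<bar> | z. N z \<le> 1}" by auto
  then show "{\<bar>f z\<bar> | z. N z \<le> 1} \<noteq> {}" by blast
next
  fix w assume "w \<in> {\<bar>f z\<bar> | z. N z \<le> 1}"
  then obtain z where "N z \<le> 1" "w = \<bar>f z\<bar>" by blast
  then show "w \<le> c" using f[of z] c by (smt (verit) mult_left_le)
qed

lemma supp_set_eq:
  assumes "w \<noteq> 0"
  shows "supp_set N w = {f \<in> dual_ball N. f w = N w}"
proof (intro set_eqI iffI)
  fix f assume "f \<in> supp_set N w"
  then have "bdd_functional N f" "fnorm N f = 1" "f w = N w" unfolding supp_set_def by auto
  then show "f \<in> {f \<in> dual_ball N. f w = N w}"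
    using abs_le_fnorm unfolding dual_ball_def bdd_functional_def by fastforce
next
  fix f assume "f \<in> {f \<in> dual_ball N. f w = N w}"
  then have f: "linear f" "\<And>z. \<bar>f z\<bar> \<le> N z" and fw: "f w = N w"
    unfolding dual_ball_def by auto
  then have bdd: "bdd_functional N f" unfolding bdd_functional_def by (metis mult_1)
  have "N w \<le> fnorm N f * N w" using abs_le_fnorm[OF bdd, of w] fw nonneg[of w] by simp
  moreover have "0 < N w" using assms nonneg[of w] eq_0[of w] by fastforce
  ultimately have "1 \<le> fnorm N f" by simp
  moreover have "fnorm N f \<le> 1" using f by (intro fnorm_le) auto
  ultimately show "f \<in> supp_set N w" using bdd fw unfolding supp_set_def by auto
qed

lemma delta_smooth_iff:
  assumes "0 \<le> \<delta>"
  shows "delta_smooth N \<delta> w \<longleftrightarrow>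
    w \<noteq> 0 \<and> (\<forall>f\<in>supp_set N w. \<forall>g\<in>supp_set N w. \<forall>z. \<bar>f z - g z\<bar> \<le> \<delta> * N z)"
proof (cases "w = 0")
  case False
  have "fnorm N (\<lambda>z. f z - g z) \<le> \<delta> \<longleftrightarrow> (\<forall>z. \<bar>f z - g z\<bar> \<le> \<delta> * N z)"
    if "f \<in> supp_set N w" "g \<in> supp_set N w" for f g
  proof
    from that False have "f \<in> dual_ball N" "g \<in> dual_ball N" by (auto simp: supp_set_eq)
    then have "linear (\<lambda>z. f z - g z)" "\<bar>f z - g z\<bar> \<le> 2 * N z" for z
      unfolding dual_ball_def by (auto intro: linear_compose_sub) (smt (verit))
    then have bdd: "bdd_functional N (\<lambda>z. f z - g z)" unfolding bdd_functional_def by blast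
    assume "fnorm N (\<lambda>z. f z - g z) \<le> \<delta>"
    then show "\<forall>z. \<bar>f z - g z\<bar> \<le> \<delta> * N z"
      using abs_le_fnorm[OF bdd] nonneg by (meson mult_right_mono order_trans)
  qed (use assms in \<open>auto intro: fnorm_le\<close>)
  then show ?thesis unfolding delta_smooth_def by auto
qed (simp add: delta_smooth_def)

end

interpretation norm: norm_function "norm :: 'a::real_normed_vector \<Rightarrow> real"
  by unfold_locales auto

interpretation l1: norm_function "l1_norm :: 'a::real_normed_vector \<times> 'b::real_normed_vector \<Rightarrow> real"
  by unfold_locales (auto simp: l1_norm_def algebra_simps prod_eq_iff add_nonneg_eq_0_iff)

section \<open>Smoothness in the 1-sum\<close>

lemma dual_ball_l1_norm:
  fixes f :: "'a::real_normed_vector \<times> 'b::real_normed_vector \<Rightarrow> real"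
  shows "f \<in> dual_ball l1_norm \<longleftrightarrow>
    (\<exists>\<phi>\<in>dual_ball norm. \<exists>\<psi>\<in>dual_ball norm. f = (\<lambda>p. \<phi> (fst p) + \<psi> (snd p)))"
proof
  assume "f \<in> dual_ball l1_norm"
  then have f: "linear f" "\<And>p. \<bar>f p\<bar> \<le> l1_norm p" unfolding dual_ball_def by auto
  have "linear (\<lambda>a. (a, 0::'b))" "linear (\<lambda>b. (0::'a, b))"
    by (auto intro!: linearI)
  then have "linear (\<lambda>a. f (a, 0))" "linear (\<lambda>b. f (0, b))"
    using linear_compose[OF _ f(1)] unfolding o_def by blast+
  moreover have "\<bar>f (a, 0)\<bar> \<le> norm a" "\<bar>f (0, b)\<bar> \<le> norm b" for a b
    using f(2)[of "(a, 0)"] f(2)[of "(0, b)"] by (simp_all add: l1_norm_def)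
  ultimately have "(\<lambda>a. f (a, 0)) \<in> dual_ball norm" "(\<lambda>b. f (0, b)) \<in> dual_ball norm"
    unfolding dual_ball_def by blast+
  then show "\<exists>\<phi>\<in>dual_ball norm. \<exists>\<psi>\<in>dual_ball norm. f = (\<lambda>p. \<phi> (fst p) + \<psi> (snd p))"
  proof (intro bexI[of _ "\<lambda>a. f (a, 0)"] bexI[of _ "\<lambda>b. f (0, b)"])
    show "f = (\<lambda>p. f (fst p, 0) + f (0, snd p))"
    proof
      fix p :: "'a \<times> 'b"
      show "f p = f (fst p, 0) + f (0, snd p)"
        using linear_add[OF f(1), of "(fst p, 0)" "(0, snd p)"] by simp
    qed
  qed
next
  assume "\<exists>\<phi>\<in>dual_ball norm. \<exists>\<psi>\<in>dual_ball norm. f = (\<lambda>p. \<phi> (fst p) + \<psi> (snd p))"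
  then obtain \<phi> \<psi> where \<phi>: "linear \<phi>" "\<And>a. \<bar>\<phi> a\<bar> \<le> norm a"
    and \<psi>: "linear \<psi>" "\<And>b. \<bar>\<psi> b\<bar> \<le> norm b" and f: "f = (\<lambda>p. \<phi> (fst p) + \<psi> (snd p))"
    unfolding dual_ball_def by blast
  have "linear f"
    unfolding f using linear_compose[OF linear_fst \<phi>(1)] linear_compose[OF linear_snd \<psi>(1)]
    by (intro linear_compose_add) (simp_all add: o_def)
  moreover have "\<bar>f p\<bar> \<le> l1_norm p" for p
    using \<phi>(2)[of "fst p"] \<psi>(2)[of "snd p"] unfolding f l1_norm_def by linarith
  ultimately show "f \<in> dual_ball l1_norm" unfolding dual_ball_def by blast
qed

lemma supp_set_l1_norm:
  fixes x :: "'a::real_normed_vector" and y :: "'b::real_normed_vector"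
  assumes xy: "(x, y) \<noteq> 0"
  shows "f \<in> supp_set l1_norm (x, y) \<longleftrightarrow>
    (\<exists>\<phi>\<in>dual_ball norm. \<exists>\<psi>\<in>dual_ball norm.
      \<phi> x = norm x \<and> \<psi> y = norm y \<and> f = (\<lambda>p. \<phi> (fst p) + \<psi> (snd p)))"
proof
  assume "f \<in> supp_set l1_norm (x, y)"
  then have "f \<in> dual_ball l1_norm" and fxy: "f (x, y) = norm x + norm y"
    using xy by (simp_all add: l1.supp_set_eq l1_norm_def)
  then obtain \<phi> \<psi> where \<phi>: "\<phi> \<in> dual_ball norm" and \<psi>: "\<psi> \<in> dual_ball norm"
    and f: "f = (\<lambda>p. \<phi> (fst p) + \<psi> (snd p))"
    unfolding dual_ball_l1_norm by blast
  have "\<phi> x \<le> norm x" "\<psi> y \<le> norm y"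
    using \<phi> \<psi> unfolding dual_ball_def by (auto dest: abs_le_D1)
  with fxy f have "\<phi> x = norm x" "\<psi> y = norm y" by simp_all
  with \<phi> \<psi> f show "\<exists>\<phi>\<in>dual_ball norm. \<exists>\<psi>\<in>dual_ball norm.
      \<phi> x = norm x \<and> \<psi> y = norm y \<and> f = (\<lambda>p. \<phi> (fst p) + \<psi> (snd p))" by blast
next
  assume "\<exists>\<phi>\<in>dual_ball norm. \<exists>\<psi>\<in>dual_ball norm.
      \<phi> x = norm x \<and> \<psi> y = norm y \<and> f = (\<lambda>p. \<phi> (fst p) + \<psi> (snd p))"
  then obtain \<phi> \<psi> where "\<phi> \<in> dual_ball norm" "\<psi> \<in> dual_ball norm"
    and "\<phi> x = norm x" "\<psi> y = norm y" and f: "f = (\<lambda>p. \<phi> (fst p) + \<psi> (snd p))"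
    by blast
  then have "f \<in> dual_ball l1_norm" "f (x, y) = l1_norm (x, y)"
    unfolding dual_ball_l1_norm l1_norm_def by auto
  then show "f \<in> supp_set l1_norm (x, y)" using xy by (simp add: l1.supp_set_eq)
qed

lemma delta_smooth_l1_norm_swap:
  fixes x :: "'a::real_normed_vector" and y :: "'b::real_normed_vector"
  assumes "0 \<le> \<delta>" and smooth: "delta_smooth l1_norm \<delta> (x, y)"
  shows "delta_smooth l1_norm \<delta> (y, x)"
proof -
  have xy: "(x, y) \<noteq> 0" and bound: "\<And>f g z. f \<in> supp_set l1_norm (x, y) \<Longrightarrow>
      g \<in> supp_set l1_norm (x, y) \<Longrightarrow> \<bar>f z - g z\<bar> \<le> \<delta> * l1_norm z"
    using smooth \<open>0 \<le> \<delta>\<close> by (auto simp: l1.delta_smooth_iff)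
  then have yx: "(y, x) \<noteq> 0" by (auto simp: zero_prod_def)
  have swap: "f \<circ> prod.swap \<in> supp_set l1_norm (x, y)" if "f \<in> supp_set l1_norm (y, x)" for f
    using that by (force simp: supp_set_l1_norm[OF xy] supp_set_l1_norm[OF yx] o_def)
  have "\<bar>f z - g z\<bar> \<le> \<delta> * l1_norm z"
    if "f \<in> supp_set l1_norm (y, x)" "g \<in> supp_set l1_norm (y, x)" for f g z
    using bound[OF swap swap, OF that, of "prod.swap z"] by (simp add: l1_norm_def add.commute)
  then show ?thesis using yx \<open>0 \<le> \<delta>\<close> by (simp add: l1.delta_smooth_iff)
qed

lemma not_delta_smooth_l1_norm_first:
  fixes x :: "'a::real_normed_vector" and v :: "'b::real_normed_vector"
  assumes "x \<noteq> 0" "v \<noteq> 0" "0 \<le> \<epsilon>" "\<epsilon> < 2"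
  shows "\<not> delta_smooth l1_norm \<epsilon> (x, 0::'b)"
proof
  assume smooth: "delta_smooth l1_norm \<epsilon> (x, 0::'b)"
  obtain \<phi> where \<phi>: "\<phi> \<in> dual_ball norm" "\<phi> x = norm x"
    by (rule norming_functional_exists)
  obtain \<psi> where \<psi>: "\<psi> \<in> dual_ball norm" "\<psi> v = norm v"
    by (rule norming_functional_exists)
  have x0: "(x, 0::'b) \<noteq> 0" using \<open>x \<noteq> 0\<close> by (simp add: zero_prod_def)
  have minus_\<psi>: "(\<lambda>b. - \<psi> b) \<in> dual_ball norm" and "\<psi> 0 = 0"
    using \<psi>(1) by (auto simp: dual_ball_def linear_compose_neg linear_0)
  have "(\<lambda>p. \<phi> (fst p) + \<psi> (snd p)) \<in> supp_set l1_norm (x, 0::'b)"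
    unfolding supp_set_l1_norm[OF x0] using \<phi> \<psi> \<open>\<psi> 0 = 0\<close>
    by (intro bexI[of _ \<phi>] bexI[of _ \<psi>]) auto
  moreover have "(\<lambda>p. \<phi> (fst p) + - \<psi> (snd p)) \<in> supp_set l1_norm (x, 0::'b)"
    unfolding supp_set_l1_norm[OF x0] using \<phi> minus_\<psi> \<open>\<psi> 0 = 0\<close>
    by (intro bexI[of _ \<phi>] bexI[of _ "\<lambda>b. - \<psi> b"]) auto
  ultimately have "\<bar>\<psi> v - - \<psi> v\<bar> \<le> \<epsilon> * l1_norm (0::'a, v)"
    using smooth \<open>0 \<le> \<epsilon>\<close> unfolding l1.delta_smooth_iff[OF \<open>0 \<le> \<epsilon>\<close>] by fastforce
  then show False
    using \<psi>(2) \<open>v \<noteq> 0\<close> \<open>\<epsilon> < 2\<close> by (simp add: l1_norm_def)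
qed

lemma delta_smooth_l1_norm_pair:
  fixes x :: "'a::real_normed_vector" and y :: "'b::real_normed_vector"
  assumes "x \<noteq> 0" "y \<noteq> 0" "0 \<le> \<epsilon>x" "0 \<le> \<epsilon>y"
    and smooth_x: "delta_smooth norm \<epsilon>x x" and smooth_y: "delta_smooth norm \<epsilon>y y"
  shows "delta_smooth l1_norm (max \<epsilon>x \<epsilon>y) (x, y)"
proof -
  have xy: "(x, y) \<noteq> 0" using \<open>x \<noteq> 0\<close> by (simp add: zero_prod_def)
  have "\<bar>f z - g z\<bar> \<le> max \<epsilon>x \<epsilon>y * l1_norm z"
    if f: "f \<in> supp_set l1_norm (x, y)" and g: "g \<in> supp_set l1_norm (x, y)" for f g z
  proof -
    obtain \<phi>1 \<psi>1 \<phi>2 \<psi>2 where "\<phi>1 \<in> supp_set norm x" "\<phi>2 \<in> supp_set norm x"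
      "\<psi>1 \<in> supp_set norm y" "\<psi>2 \<in> supp_set norm y"
      and fg: "f = (\<lambda>p. \<phi>1 (fst p) + \<psi>1 (snd p))" "g = (\<lambda>p. \<phi>2 (fst p) + \<psi>2 (snd p))"
      using f g \<open>x \<noteq> 0\<close> \<open>y \<noteq> 0\<close> by (auto simp: supp_set_l1_norm[OF xy] norm.supp_set_eq)
    then have "\<bar>\<phi>1 (fst z) - \<phi>2 (fst z)\<bar> \<le> \<epsilon>x * norm (fst z)"
      "\<bar>\<psi>1 (snd z) - \<psi>2 (snd z)\<bar> \<le> \<epsilon>y * norm (snd z)"
      using smooth_x smooth_y \<open>0 \<le> \<epsilon>x\<close> \<open>0 \<le> \<epsilon>y\<close> by (auto simp: norm.delta_smooth_iff)
    moreover have "\<epsilon>x * norm (fst z) + \<epsilon>y * norm (snd z) \<le> max \<epsilon>x \<epsilon>y * l1_norm z"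
      unfolding l1_norm_def distrib_left by (intro add_mono mult_right_mono) auto
    ultimately show ?thesis unfolding fg by linarith
  qed
  then show ?thesis using xy \<open>0 \<le> \<epsilon>x\<close> by (simp add: l1.delta_smooth_iff)
qed

theorem theorem6p4:
  fixes x :: "'a::real_normed_vector" and y :: "'b::real_normed_vector"
  assumes nontriv_X: "\<exists>u::'a. u \<noteq> 0"
      and nontriv_Y: "\<exists>v::'b. v \<noteq> 0"
  shows "(x \<noteq> 0 \<longrightarrow> (\<forall>\<epsilon>. 0 \<le> \<epsilon> \<and> \<epsilon> < 2 \<longrightarrow> \<not> delta_smooth l1_norm \<epsilon> (x, 0::'b)))
       \<and> (y \<noteq> 0 \<longrightarrow> (\<forall>\<epsilon>. 0 \<le> \<epsilon> \<and> \<epsilon> < 2 \<longrightarrow> \<not> delta_smooth l1_norm \<epsilon> (0::'a, y)))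
       \<and> (\<forall>\<epsilon>x \<epsilon>y. x \<noteq> 0 \<and> y \<noteq> 0 \<and> 0 \<le> \<epsilon>x \<and> \<epsilon>x < 2 \<and> 0 \<le> \<epsilon>y \<and> \<epsilon>y < 2
            \<and> delta_smooth norm \<epsilon>x x \<and> delta_smooth norm \<epsilon>y y
            \<longrightarrow> delta_smooth l1_norm (max \<epsilon>x \<epsilon>y) (x, y))"
proof (intro conjI allI impI)
  fix \<epsilon> :: real assume "x \<noteq> 0" "0 \<le> \<epsilon> \<and> \<epsilon> < 2"
  with nontriv_Y show "\<not> delta_smooth l1_norm \<epsilon> (x, 0::'b)"
    using not_delta_smooth_l1_norm_first by blast
next
  fix \<epsilon> :: real assume "y \<noteq> 0" "0 \<le> \<epsilon> \<and> \<epsilon> < 2"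
  with nontriv_X have "\<not> delta_smooth l1_norm \<epsilon> (y, 0::'a)"
    using not_delta_smooth_l1_norm_first by blast
  with \<open>0 \<le> \<epsilon> \<and> \<epsilon> < 2\<close> show "\<not> delta_smooth l1_norm \<epsilon> (0::'a, y)"
    using delta_smooth_l1_norm_swap by blast
next
  fix \<epsilon>x \<epsilon>y :: real
  assume "x \<noteq> 0 \<and> y \<noteq> 0 \<and> 0 \<le> \<epsilon>x \<and> \<epsilon>x < 2 \<and> 0 \<le> \<epsilon>y \<and> \<epsilon>y < 2
    \<and> delta_smooth norm \<epsilon>x x \<and> delta_smooth norm \<epsilon>y y"
  then show "delta_smooth l1_norm (max \<epsilon>x \<epsilon>y) (x, y)"
    using delta_smooth_l1_norm_pair by blast
qed

end
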